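(* Let $q\neq-1$ be real and $n\ge0$. Then $$T_{2n+1}(x,s,q)=\sum_{k=0}^{n}\begin{bmatrix} 2n+1\\ 2k\end{bmatrix}(-1)^{n-k}\,t_{2n-2k+1}(q)\,x^{2n+1-2k}\,T_{2k}(x,s,q).$$
   Context: $T_0=1$, $T_1=x$, $T_n(x,s,q)=(1+q^{n-1})x\,T_{n-1}(x,s,q)+q^{n-1}s\,T_{n-2}(x,s,q)$ for $n\ge2$. Notation: $[m]=1+q+\cdots+q^{m-1}$, $[m]!=[1]\cdots[m]$, $\begin{bmatrix} m\\ j\end{bmatrix}=\frac{[m]!}{[j]![m-j]!}$. The $q$-exponential is the formal power series $e(z)=\sum_{m\ge0}z^m/[m]!$, and the $q$-tangent numbers $t_{2m+1}(q)$ are defined by the formal power series identity $\frac{e(z)-e(-z)}{e(z)+e(-z)}=\sum_{m\ge0}\frac{(-1)^m t_{2m+1}(q)}{[2m+1]!}z^{2m+1}$. *)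

theory Defs
  imports Complex_Main "HOL-Computational_Algebra.Formal_Power_Series"
begin

fun T :: "nat \<Rightarrow> real \<Rightarrow> real \<Rightarrow> real \<Rightarrow> real" where
  "T 0 x s q = 1"
| "T (Suc 0) x s q = x"
| "T (Suc (Suc n)) x s q =
     (1 + q ^ (Suc n)) * x * T (Suc n) x s q + q ^ (Suc n) * s * T n x s q"

definition qint :: "real \<Rightarrow> nat \<Rightarrow> real" where
  "qint q m = (\<Sum>i<m. q ^ i)"

definition qfact :: "real \<Rightarrow> nat \<Rightarrow> real" where
  "qfact q m = (\<Prod>i=1..m. qint q i)"

definition qbinom :: "real \<Rightarrow> nat \<Rightarrow> nat \<Rightarrow> real" where
  "qbinom q m j = qfact q m / (qfact q j * qfact q (m - j))"

text \<open>The formal power series e(c z) = sum_m c^m z^m / [m]! ; e(z) is c = 1, e(-z) is c = -1.\<close>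
definition qexp_fps :: "real \<Rightarrow> real \<Rightarrow> real fps" where
  "qexp_fps q c = Abs_fps (\<lambda>m. c ^ m / qfact q m)"

definition qtan_fps :: "real \<Rightarrow> real fps" where
  "qtan_fps q = (qexp_fps q 1 - qexp_fps q (-1)) / (qexp_fps q 1 + qexp_fps q (-1))"

text \<open>q-tangent numbers: t_{2m+1}(q) is determined by the coefficient of z^(2m+1),
  which equals (-1)^m t_{2m+1}(q) / [2m+1]!.  Only meaningful for odd index.\<close>
definition qtan :: "real \<Rightarrow> nat \<Rightarrow> real" where
  "qtan q j = (-1) ^ ((j - 1) div 2) * qfact q j * fps_nth (qtan_fps q) j"

end

(*
  Let F(z) = \<Sum> T_n z^n / [n]! and let D, S be the q-derivative and the dilation z \<mapsto> q z.
  The recurrence for T_n says D\<^sup>2 F = x D F + q x S D F + q s S F.  Since D e(-xz) = -x e(-xz),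
  the product G = F(z) e(-xz) satisfies D\<^sup>2 G = x\<^sup>2 G + q s S G, which only links coefficients
  two apart; as G_1 = 0, G is even.  Hence F(-z) e(xz) = F(z) e(-xz), and solving for the odd part
  gives F(z) - F(-z) = (F(z) + F(-z)) tan_q(xz), whose coefficient of z^(2n+1) is the claim.
*)
theory Submission
  imports Defs
begin

unbundle fps_syntax

lemma qint_Suc: "qint q (Suc m) = qint q m + q ^ m"
  by (simp add: qint_def)

lemma qfact_Suc: "qfact q (Suc m) = qfact q m * qint q (Suc m)"
  by (simp add: qfact_def)

lemma qint_add: "qint q (i + m) = qint q i + q ^ i * qint q m"
  by (induction m) (simp_all add: qint_def algebra_simps power_add)

lemma one_minus_q_mult_qint: "(1 - q) * qint q m = 1 - q ^ m"
proof (induction m)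
  case (Suc m)
  have "(1 - q) * qint q (Suc m) = (1 - q) * qint q m + (1 - q) * q ^ m"
    by (simp add: qint_Suc distrib_left)
  then show ?case
    using Suc by (simp add: algebra_simps)
qed (simp add: qint_def)

lemma qint_nonzero:
  assumes "q \<noteq> -1" "m \<noteq> 0"
  shows "qint q m \<noteq> 0"
proof (cases "q = 1")
  case True
  then show ?thesis using assms by (simp add: qint_def)
next
  case False
  have "q ^ m \<noteq> 1"
  proof
    assume "q ^ m = 1"
    then have "\<bar>q\<bar> = 1"
      using power_eq_1_iff[of q m] assms by auto
    then show False
      using False assms by (auto simp: abs_if split: if_splits)
  qed
  then show ?thesis
    using one_minus_q_mult_qint[of q m] by auto
qed

lemma qfact_nonzero: "q \<noteq> -1 \<Longrightarrow> qfact q m \<noteq> 0"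
  by (simp add: qfact_def qint_nonzero)

definition fps_dilate :: "'a::comm_semiring_1 \<Rightarrow> 'a fps \<Rightarrow> 'a fps" where
  "fps_dilate c f = Abs_fps (\<lambda>n. c ^ n * f $ n)"

lemma fps_dilate_nth [simp]: "fps_dilate c f $ n = c ^ n * f $ n"
  by (simp add: fps_dilate_def)

lemma fps_dilate_add: "fps_dilate c (f + g) = fps_dilate c f + fps_dilate c g"
  by (rule fps_ext) (simp add: algebra_simps)

lemma fps_dilate_diff:
  "fps_dilate (c::'a::comm_ring_1) (f - g) = fps_dilate c f - fps_dilate c g"
  by (rule fps_ext) (simp add: algebra_simps)

lemma fps_dilate_mult: "fps_dilate c (f * g) = fps_dilate c f * fps_dilate c g"
  by (rule fps_ext)
    (simp add: fps_mult_nth sum_distrib_left algebra_simps power_add[symmetric])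

lemma fps_dilate_const_mult: "fps_dilate c (fps_const a * f) = fps_const a * fps_dilate c f"
  by (rule fps_ext) (simp add: algebra_simps)

lemma fps_dilate_qexp_fps: "fps_dilate c (qexp_fps q d) = qexp_fps q (c * d)"
  by (rule fps_ext) (simp add: qexp_fps_def power_mult_distrib)

definition qderiv :: "real \<Rightarrow> real fps \<Rightarrow> real fps" where
  "qderiv q f = Abs_fps (\<lambda>n. qint q (Suc n) * f $ Suc n)"

lemma qderiv_nth [simp]: "qderiv q f $ n = qint q (Suc n) * f $ Suc n"
  by (simp add: qderiv_def)

lemma qderiv_add: "qderiv q (f + g) = qderiv q f + qderiv q g"
  by (rule fps_ext) (simp add: algebra_simps)

lemma qderiv_const_mult: "qderiv q (fps_const c * f) = fps_const c * qderiv q f"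
  by (rule fps_ext) simp

lemma qderiv_dilate: "qderiv q (fps_dilate q f) = fps_const q * fps_dilate q (qderiv q f)"
  by (rule fps_ext) simp

lemma fps_X_mult_qderiv: "fps_const (1 - q) * fps_X * qderiv q f = f - fps_dilate q f"
proof (rule fps_ext)
  fix n
  show "(fps_const (1 - q) * fps_X * qderiv q f) $ n = (f - fps_dilate q f) $ n"
  proof (cases n)
    case (Suc m)
    have "(qint q (Suc m) + q * q ^ m) * f $ Suc m = (1 + q * qint q (Suc m)) * f $ Suc m"
      using one_minus_q_mult_qint[of q "Suc m"] by (simp add: algebra_simps)
    then show ?thesis
      using Suc by (simp add: algebra_simps)
  qed simp
qed

lemma qderiv_mult: "qderiv q (f * g) = qderiv q f * g + fps_dilate q f * qderiv q g"
proof (rule fps_ext)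
  fix n
  define a where "a i = qint q i * (f $ i * g $ (Suc n - i))" for i
  define b where "b i = q ^ i * qint q (Suc n - i) * (f $ i * g $ (Suc n - i))" for i
  have qint_split: "qint q (Suc n) * (f $ i * g $ (Suc n - i)) = a i + b i" if "i \<le> Suc n" for i
    using qint_add[of q i "Suc n - i"] that by (simp add: a_def b_def algebra_simps)
  have "sum a {0..Suc n} = (\<Sum>i=0..n. a (Suc i))"
    by (subst sum.atLeast0_atMost_Suc_shift) (simp add: a_def qint_def)
  also have "\<dots> = (qderiv q f * g) $ n"
    by (simp add: fps_mult_nth a_def mult.assoc)
  finally have sum_a: "sum a {0..Suc n} = (qderiv q f * g) $ n" .
  have "sum b {0..Suc n} = (\<Sum>i=0..n. b i)"
    by (simp add: b_def qint_def)
  also have "\<dots> = (fps_dilate q f * qderiv q g) $ n"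
    by (auto simp: fps_mult_nth b_def Suc_diff_le intro: sum.cong)
  finally have sum_b: "sum b {0..Suc n} = (fps_dilate q f * qderiv q g) $ n" .
  have "qderiv q (f * g) $ n = (\<Sum>i=0..Suc n. qint q (Suc n) * (f $ i * g $ (Suc n - i)))"
    by (simp only: qderiv_nth fps_mult_nth sum_distrib_left)
  also have "\<dots> = sum a {0..Suc n} + sum b {0..Suc n}"
    by (simp add: qint_split sum.distrib[symmetric])
  finally show "qderiv q (f * g) $ n = (qderiv q f * g + fps_dilate q f * qderiv q g) $ n"
    unfolding sum_a sum_b by simp
qed

lemma qderiv_qexp_fps:
  assumes "q \<noteq> -1"
  shows "qderiv q (qexp_fps q c) = fps_const c * qexp_fps q c"
proof (rule fps_ext)
  fix n
  have "qint q (Suc n) \<noteq> 0" "qfact q n \<noteq> 0"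
    using qint_nonzero qfact_nonzero assms by auto
  then show "qderiv q (qexp_fps q c) $ n = (fps_const c * qexp_fps q c) $ n"
    by (simp add: qexp_fps_def qfact_Suc field_simps)
qed

lemma qderiv_mult_eigen:
  assumes "qderiv q e = fps_const c * e"
  shows "qderiv q (f * e) = (qderiv q f + fps_const c * fps_dilate q f) * e"
  unfolding qderiv_mult assms by (simp add: algebra_simps del: fps_const_neg)

lemma fps_dilate_eigen:
  assumes "qderiv q e = fps_const c * e"
  shows "fps_dilate q e = e - fps_const c * (fps_const (1 - q) * fps_X) * e"
  using fps_X_mult_qderiv[of q e] unfolding assms by (simp add: algebra_simps)

lemma qderiv_qderiv_mult_eigen:
  fixes f e :: "real fps"
  assumes f: "qderiv q (qderiv q f) = fps_const x * qderiv q f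
              + fps_const (q * x) * fps_dilate q (qderiv q f) + fps_const (q * s) * fps_dilate q f"
    and e: "qderiv q e = fps_const (-x) * e"
  shows "qderiv q (qderiv q (f * e)) =
           fps_const (x ^ 2) * (f * e) + fps_const (q * s) * fps_dilate q (f * e)"
proof -
  let ?D = "qderiv q" and ?S = "fps_dilate q" and ?Z = "fps_const (1 - q) * fps_X"
  let ?x = "fps_const x" and ?q = "fps_const q" and ?s = "fps_const s"
  let ?L = "?D (?D f) - ?q * ?x * ?S (?D f) - ?x * ?S (?D f) + ?x ^ 2 * ?S (?S f)"
    and ?R = "?x ^ 2 * f + ?q * ?s * ?S f * (1 + ?x * ?Z)"
  have "?D (?D (f * e)) = ?L * e"
    unfolding qderiv_mult_eigen[OF e] qderiv_add qderiv_const_mult qderiv_dilate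
      fps_dilate_add fps_dilate_const_mult
    by (simp add: algebra_simps power2_eq_square flip: fps_const_neg fps_const_mult)
  also have "?L = ?R"
  proof -
    \<comment> \<open>a combination of the equation for \<open>f\<close> and three instances of \<open>fps_X_mult_qderiv\<close>\<close>
    have "?L - ?R =
        (1 + ?x * ?Z) * (?D (?D f) - (fps_const x * ?D f
          + fps_const (q * x) * ?S (?D f) + fps_const (q * s) * ?S f))
        - ?x * (?Z * ?D (?D f) - (?D f - ?S (?D f)))
        + ?x ^ 2 * ((?Z * ?D f - (f - ?S f)) + (?Z * ?D (?S f) - (?S f - ?S (?S f))))"
      unfolding qderiv_dilate
      by (simp add: algebra_simps power2_eq_square flip: fps_const_mult
          del: fps_const_neg fps_const_add fps_const_sub fps_const_power)
    also have "\<dots> = 0"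
      unfolding fps_X_mult_qderiv f[symmetric] by simp
    finally show ?thesis
      by simp
  qed
  also have "?R * e = fps_const (x ^ 2) * (f * e) + fps_const (q * s) * ?S (f * e)"
    by (simp add: fps_dilate_mult fps_dilate_eigen[OF e] algebra_simps
        flip: fps_const_neg fps_const_mult fps_const_power del: fps_const_add fps_const_sub)
  finally show ?thesis .
qed

lemma fps_dilate_neg1_eq_self_if_qderiv_qderiv:
  fixes g :: "real fps"
  assumes "q \<noteq> -1"
    and g: "qderiv q (qderiv q g) = fps_const a * g + fps_const b * fps_dilate q g"
    and "g $ 1 = 0"
  shows "fps_dilate (-1) g = g"
proof -
  have odd_coeffs: "g $ (2 * k + 1) = 0" for k
  proof (induction k)
    case (Suc k)
    have "qint q (2 * k + 2) * (qint q (2 * k + 3) * g $ (2 * k + 3)) = 0"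
      using arg_cong[OF g, of "\<lambda>h. h $ (2 * k + 1)"] Suc by (simp add: numeral_eq_Suc)
    then show ?case
      using qint_nonzero[OF assms(1)] by (simp add: numeral_eq_Suc)
  qed (use assms(3) in simp)
  show ?thesis
  proof (rule fps_ext)
    fix n
    show "fps_dilate (-1) g $ n = g $ n"
      using odd_coeffs by (cases "even n") (auto elim!: oddE)
  qed
qed

definition T_egf :: "real \<Rightarrow> real \<Rightarrow> real \<Rightarrow> real fps" where
  "T_egf x s q = Abs_fps (\<lambda>n. T n x s q / qfact q n)"

lemma qderiv_qderiv_T_egf:
  assumes "q \<noteq> -1"
  shows "qderiv q (qderiv q (T_egf x s q)) = fps_const x * qderiv q (T_egf x s q)
           + fps_const (q * x) * fps_dilate q (qderiv q (T_egf x s q))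
           + fps_const (q * s) * fps_dilate q (T_egf x s q)"
proof (rule fps_ext)
  fix n
  have "qint q (Suc n) \<noteq> 0" "qint q (Suc (Suc n)) \<noteq> 0" "qfact q n \<noteq> 0"
    using qint_nonzero qfact_nonzero assms by auto
  then show "qderiv q (qderiv q (T_egf x s q)) $ n = (fps_const x * qderiv q (T_egf x s q)
           + fps_const (q * x) * fps_dilate q (qderiv q (T_egf x s q))
           + fps_const (q * s) * fps_dilate q (T_egf x s q)) $ n"
    by (simp add: T_egf_def qfact_Suc field_simps)
qed

lemma T_egf_reflection:
  assumes "q \<noteq> -1"
  shows "fps_dilate (-1) (T_egf x s q) * qexp_fps q x = T_egf x s q * qexp_fps q (-x)"
proof -
  let ?g = "T_egf x s q * qexp_fps q (-x)"
  have "qderiv q (qexp_fps q (-x)) = fps_const (-x) * qexp_fps q (-x)"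
    by (rule qderiv_qexp_fps[OF assms])
  then have "qderiv q (qderiv q ?g) = fps_const (x ^ 2) * ?g + fps_const (q * s) * fps_dilate q ?g"
    by (rule qderiv_qderiv_mult_eigen[OF qderiv_qderiv_T_egf[OF assms]])
  moreover have "?g $ 1 = 0"
    by (simp add: T_egf_def qexp_fps_def qfact_def qint_def fps_mult_nth)
  ultimately have "fps_dilate (-1) ?g = ?g"
    by (rule fps_dilate_neg1_eq_self_if_qderiv_qderiv[OF assms])
  then show ?thesis
    by (simp add: fps_dilate_mult fps_dilate_qexp_fps)
qed

lemma qtan_fps_mult_denominator:
  "qtan_fps q * (qexp_fps q 1 + qexp_fps q (-1)) = qexp_fps q 1 - qexp_fps q (-1)"
proof -
  have unit: "(qexp_fps q 1 + qexp_fps q (-1)) $ 0 \<noteq> 0"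
    by (simp add: qexp_fps_def qfact_def)
  show ?thesis
    unfolding qtan_fps_def fps_divide_unit[OF unit]
    using inverse_mult_eq_1[OF unit] by (simp add: mult.assoc)
qed

lemma T_egf_odd_part:
  assumes "q \<noteq> -1"
  shows "T_egf x s q - fps_dilate (-1) (T_egf x s q) =
           (T_egf x s q + fps_dilate (-1) (T_egf x s q)) * fps_dilate x (qtan_fps q)"
proof -
  let ?F = "T_egf x s q" and ?E = "qexp_fps q x" and ?E' = "qexp_fps q (-x)"
  have tan: "fps_dilate x (qtan_fps q) * (?E + ?E') = ?E - ?E'"
    using arg_cong[OF qtan_fps_mult_denominator, of "fps_dilate x"]
    by (simp add: fps_dilate_mult fps_dilate_add fps_dilate_diff fps_dilate_qexp_fps)
  have "(?E + ?E') $ 0 \<noteq> 0"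
    by (simp add: qexp_fps_def qfact_def)
  then have nz: "?E + ?E' \<noteq> 0"
    by (metis fps_zero_nth)
  have "(?F - fps_dilate (-1) ?F) * (?E + ?E') = (?F + fps_dilate (-1) ?F) * (?E - ?E')"
    using T_egf_reflection[OF assms, of x s] by algebra
  also have "\<dots> = (?F + fps_dilate (-1) ?F) * fps_dilate x (qtan_fps q) * (?E + ?E')"
    by (simp add: tan mult.assoc)
  finally show ?thesis
    using nz by simp
qed

lemma fps_nth_odd_eq_sum_even:
  fixes f h :: "'a::field_char_0 fps"
  assumes "f - fps_dilate (-1) f = (f + fps_dilate (-1) f) * h"
  shows "f $ (2 * n + 1) = (\<Sum>k\<le>n. f $ (2 * k) * h $ (2 * n + 1 - 2 * k))"
proof -
  define a where "a i = (f + fps_dilate (-1) f) $ i * h $ (Suc (2 * n) - i)" for i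
  have "2 * f $ (2 * n + 1) = (f - fps_dilate (-1) f) $ Suc (2 * n)"
    by simp
  also have "\<dots> = (\<Sum>i\<le>Suc (2 * n). a i)"
    unfolding assms fps_mult_nth a_def by (simp add: atLeast0AtMost)
  also have "\<dots> = (\<Sum>k\<le>n. a (2 * k) + a (Suc (2 * k)))"
    by (rule sum.in_pairs_0)
  also have "\<dots> = 2 * (\<Sum>k\<le>n. f $ (2 * k) * h $ (2 * n + 1 - 2 * k))"
    by (simp add: a_def sum_distrib_left mult.assoc)
  finally show ?thesis
    by simp
qed

lemma qtan_fps_nth_odd:
  assumes "q \<noteq> -1"
  shows "qtan_fps q $ (2 * m + 1) = (-1) ^ m * qtan q (2 * m + 1) / qfact q (2 * m + 1)"
  using qfact_nonzero[OF assms] by (simp add: qtan_def power_mult_distrib[symmetric])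

lemma qfact_mult_T_egf_qtan_term:
  assumes "q \<noteq> -1" "k \<le> n"
  shows "qfact q (2*n+1) * (T_egf x s q $ (2*k) * fps_dilate x (qtan_fps q) $ (2*n+1 - 2*k)) =
    qbinom q (2*n+1) (2*k) * (-1) ^ (n - k) * qtan q (2*n - 2*k + 1)
      * x ^ (2*n + 1 - 2*k) * T (2*k) x s q"
proof -
  obtain m where m: "n = k + m"
    using assms(2) by (auto simp: le_iff_add)
  have idx: "2*n+1 - 2*k = 2*m+1" "2*n - 2*k + 1 = 2*m+1" "n - k = m"
    using m by auto
  have "fps_dilate x (qtan_fps q) $ (2*m+1) =
      x ^ (2*m+1) * ((-1) ^ m * qtan q (2*m+1) / qfact q (2*m+1))"
    using qtan_fps_nth_odd[OF assms(1)] by simp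
  then show ?thesis
    unfolding qbinom_def idx using qfact_nonzero[OF assms(1)] by (simp add: T_egf_def mult_ac)
qed

theorem theorem3p1:
  fixes q x s :: real and n :: nat
  assumes "q \<noteq> -1"
  shows "T (2*n+1) x s q =
    (\<Sum>k=0..n. qbinom q (2*n+1) (2*k) * (-1) ^ (n - k) * qtan q (2*n - 2*k + 1)
                * x ^ (2*n + 1 - 2*k) * T (2*k) x s q)"
proof -
  let ?F = "T_egf x s q" and ?\<tau> = "fps_dilate x (qtan_fps q)"
  have "T (2*n+1) x s q = qfact q (2*n+1) * ?F $ (2*n+1)"
    using qfact_nonzero[OF assms] by (simp add: T_egf_def)
  also have "\<dots> = (\<Sum>k\<le>n. qfact q (2*n+1) * (?F $ (2*k) * ?\<tau> $ (2*n+1 - 2*k)))"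
    unfolding fps_nth_odd_eq_sum_even[OF T_egf_odd_part[OF assms]] sum_distrib_left ..
  also have "\<dots> = (\<Sum>k=0..n. qbinom q (2*n+1) (2*k) * (-1) ^ (n - k) * qtan q (2*n - 2*k + 1)
                * x ^ (2*n + 1 - 2*k) * T (2*k) x s q)"
    unfolding atLeast0AtMost using qfact_mult_T_egf_qtan_term[OF assms] by (intro sum.cong) auto
  finally show ?thesis .
qed

end
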